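(* Let $(V,\mathcal{H})$ be a hypergraph and $X,Y\subseteq V$ disjoint. There exists a minimal hitting set $T\in\mathrm{Tr}(\mathcal{H})$ with $X\subseteq T\subseteq V\setminus Y$ if and only if there exists a family of edges $\{E_x\}_{x\in X}\subseteq\mathcal{H}$ such that (1) for every $x\in X$, $(E_x\setminus Y)\cap X=\{x\}$; and (2) for every edge $E\in\mathcal{H}$ with $(E\setminus Y)\cap X=\emptyset$ we have $E\setminus Y\not\subseteq\bigcup_{x\in X}(E_x\setminus Y)$.
   Context: $\mathrm{Tr}(\mathcal{H})$ denotes the set of inclusion-wise minimal hitting sets of $\mathcal{H}$ (sets meeting every edge, minimal under inclusion). *)

theory Defs
  imports Main
begin

definition hypergraph :: "'a set \<Rightarrow> 'a set set \<Rightarrow> bool" where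
  "hypergraph V H \<longleftrightarrow> finite V \<and> (\<forall>E\<in>H. E \<subseteq> V)"

definition hitting_set :: "'a set \<Rightarrow> 'a set set \<Rightarrow> 'a set \<Rightarrow> bool" where
  "hitting_set V H T \<longleftrightarrow> T \<subseteq> V \<and> (\<forall>E\<in>H. T \<inter> E \<noteq> {})"

definition Tr :: "'a set \<Rightarrow> 'a set set \<Rightarrow> 'a set set" where
  "Tr V H = {T. hitting_set V H T \<and> (\<forall>S. S \<subset> T \<longrightarrow> \<not> hitting_set V H S)}"

end

theory Submission
  imports Defs
begin

text \<open>
  Each vertex x of a minimal hitting set T has a private edge, meeting T only in x. If T contains
  X and avoids Y, the private edges of the vertices of X form the family E_x: an edge E with
  (E - Y) \<inter> X = {} is hit by T in a vertex outside X, which therefore lies in no E_x.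
  Conversely, given the family, X together with the vertices of V - Y not covered by any
  E_x - Y is a hitting set by (2); by (1) each E_x meets it only in x, so every minimal
  hitting set inside it keeps all of X.
\<close>

lemma Tr_imp_hitting_set: "T \<in> Tr V H \<Longrightarrow> hitting_set V H T"
  unfolding Tr_def by blast

lemma hitting_set_contains_Tr:
  assumes "finite T0" "hitting_set V H T0"
  shows "\<exists>T\<subseteq>T0. T \<in> Tr V H"
  using assms
proof (induction T0 rule: finite_psubset_induct)
  case (psubset A)
  show ?case
  proof (cases "A \<in> Tr V H")
    case False
    then obtain S where S: "S \<subset> A" "hitting_set V H S"
      using psubset.prems unfolding Tr_def by auto
    with psubset.IH show ?thesis by (meson order.trans psubset_imp_subset)
  qed blast
qed

lemma Tr_private_edge:
  assumes "T \<in> Tr V H" "x \<in> T"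
  shows "\<exists>E\<in>H. E \<inter> T = {x}"
proof -
  have hs: "hitting_set V H T" using assms(1) by (rule Tr_imp_hitting_set)
  have "T - {x} \<subset> T" using assms(2) by blast
  then have "\<not> hitting_set V H (T - {x})" using assms(1) unfolding Tr_def by blast
  then obtain E where "E \<in> H" "(T - {x}) \<inter> E = {}"
    using hs unfolding hitting_set_def by blast
  moreover have "T \<inter> E \<noteq> {}" using hs \<open>E \<in> H\<close> unfolding hitting_set_def by blast
  ultimately show ?thesis by blast
qed

lemma private_edges_not_cover:
  assumes "hitting_set V H T" "T \<inter> Y = {}"
    and priv: "\<And>x. x \<in> X \<Longrightarrow> F x \<inter> T = {x}"
    and "E \<in> H" "(E - Y) \<inter> X = {}"
  shows "\<not> E - Y \<subseteq> (\<Union>x\<in>X. F x - Y)"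
proof
  assume cover: "E - Y \<subseteq> (\<Union>x\<in>X. F x - Y)"
  obtain t where t: "t \<in> T" "t \<in> E" using assms(1,4) unfolding hitting_set_def by blast
  with assms(2) cover obtain x where "x \<in> X" "t \<in> F x" by blast
  with priv t have "t = x" by blast
  with t \<open>x \<in> X\<close> assms(2,5) show False by blast
qed

lemma Tr_private_edge_family:
  assumes "T \<in> Tr V H" "X \<subseteq> T" "T \<inter> Y = {}"
  shows "\<exists>F. (\<forall>x\<in>X. F x \<in> H) \<and> (\<forall>x\<in>X. (F x - Y) \<inter> X = {x}) \<and>
           (\<forall>E\<in>H. (E - Y) \<inter> X = {} \<longrightarrow> \<not> E - Y \<subseteq> (\<Union>x\<in>X. F x - Y))"
proof -
  obtain F where F: "\<And>x. x \<in> X \<Longrightarrow> F x \<in> H \<and> F x \<inter> T = {x}"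
    using Tr_private_edge[OF assms(1)] assms(2) by (metis subsetD)
  show ?thesis
  proof (intro exI[of _ F] conjI ballI impI)
    fix x assume "x \<in> X"
    with F assms(2,3) show "F x \<in> H" "(F x - Y) \<inter> X = {x}" by blast+
  next
    fix E assume "E \<in> H" "(E - Y) \<inter> X = {}"
    with F show "\<not> E - Y \<subseteq> (\<Union>x\<in>X. F x - Y)"
      by (intro private_edges_not_cover[OF Tr_imp_hitting_set[OF assms(1)] assms(3)]) blast+
  qed
qed

lemma uncovered_vertices_hitting_set:
  assumes "hypergraph V H" "X \<subseteq> V"
    and uncovered: "\<forall>E\<in>H. (E - Y) \<inter> X = {} \<longrightarrow> \<not> E - Y \<subseteq> (\<Union>x\<in>X. F x - Y)"
  shows "hitting_set V H (X \<union> (V - Y - (\<Union>x\<in>X. F x - Y)))"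
  unfolding hitting_set_def
proof (intro conjI ballI)
  fix E assume E: "E \<in> H"
  show "(X \<union> (V - Y - (\<Union>x\<in>X. F x - Y))) \<inter> E \<noteq> {}"
  proof (cases "(E - Y) \<inter> X = {}")
    case True
    with uncovered E obtain v where "v \<in> E - Y" "v \<notin> (\<Union>x\<in>X. F x - Y)" by blast
    moreover have "E \<subseteq> V" using E assms(1) unfolding hypergraph_def by blast
    ultimately show ?thesis by blast
  qed blast
qed (use assms(2) in blast)

lemma hitting_set_within_uncovered_vertices_contains:
  assumes "hitting_set V H T" "T \<subseteq> X \<union> (V - Y - (\<Union>x\<in>X. F x - Y))"
    and "F x \<in> H" "(F x - Y) \<inter> X = {x}" "x \<in> X" "X \<inter> Y = {}"
  shows "x \<in> T"
proof -
  have "F x \<inter> T \<subseteq> {x}" using assms(2,4,5,6) by blast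
  moreover have "T \<inter> F x \<noteq> {}" using assms(1,3) unfolding hitting_set_def by blast
  ultimately show ?thesis by blast
qed

lemma private_edge_family_imp_Tr:
  assumes "hypergraph V H" "X \<subseteq> V" "X \<inter> Y = {}"
    and edges: "\<forall>x\<in>X. F x \<in> H" and priv: "\<forall>x\<in>X. (F x - Y) \<inter> X = {x}"
    and uncovered: "\<forall>E\<in>H. (E - Y) \<inter> X = {} \<longrightarrow> \<not> E - Y \<subseteq> (\<Union>x\<in>X. F x - Y)"
  shows "\<exists>T\<in>Tr V H. X \<subseteq> T \<and> T \<subseteq> V - Y"
proof -
  define T0 where "T0 = X \<union> (V - Y - (\<Union>x\<in>X. F x - Y))"
  have "finite T0" using assms(1,2) unfolding hypergraph_def T0_def by (simp add: finite_subset)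
  moreover have "hitting_set V H T0"
    unfolding T0_def by (rule uncovered_vertices_hitting_set[OF assms(1,2) uncovered])
  ultimately obtain T where T: "T \<subseteq> T0" "T \<in> Tr V H" by (metis hitting_set_contains_Tr)
  have "X \<subseteq> T"
  proof
    fix x assume "x \<in> X"
    with edges priv assms(3) show "x \<in> T"
      by (intro hitting_set_within_uncovered_vertices_contains[OF Tr_imp_hitting_set[OF T(2)]
            T(1)[unfolded T0_def]]) auto
  qed
  moreover have "T \<subseteq> V - Y" using T(1) assms(2,3) unfolding T0_def by blast
  ultimately show ?thesis using T(2) by blast
qed

theorem corollary1:
  fixes V :: "'a set" and H :: "'a set set" and X Y :: "'a set"
  assumes "hypergraph V H"
    and "X \<subseteq> V" and "Y \<subseteq> V" and "X \<inter> Y = {}"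
  shows "(\<exists>T\<in>Tr V H. X \<subseteq> T \<and> T \<subseteq> V - Y) \<longleftrightarrow>
         (\<exists>Ex :: 'a \<Rightarrow> 'a set.
            (\<forall>x\<in>X. Ex x \<in> H) \<and>
            (\<forall>x\<in>X. (Ex x - Y) \<inter> X = {x}) \<and>
            (\<forall>E\<in>H. (E - Y) \<inter> X = {} \<longrightarrow> \<not> (E - Y \<subseteq> (\<Union>x\<in>X. Ex x - Y))))"
proof
  assume "\<exists>T\<in>Tr V H. X \<subseteq> T \<and> T \<subseteq> V - Y"
  then obtain T where "T \<in> Tr V H" "X \<subseteq> T" "T \<inter> Y = {}" by blast
  then show "\<exists>Ex. (\<forall>x\<in>X. Ex x \<in> H) \<and> (\<forall>x\<in>X. (Ex x - Y) \<inter> X = {x}) \<and>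
      (\<forall>E\<in>H. (E - Y) \<inter> X = {} \<longrightarrow> \<not> E - Y \<subseteq> (\<Union>x\<in>X. Ex x - Y))"
    by (rule Tr_private_edge_family)
qed (use private_edge_family_imp_Tr[OF assms(1,2,4)] in blast)

end
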